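(* Let $S=\{0,1,\dots,p-1\}$ with $p\ge 2$, let $m\ge 2$, and let $f:S^m\to S$ be a local rule. The global map $\tau$ is injective if and only if there exists no pair of periodic local configurations for $f$.
   Context: A local configuration is a finite word over $S$. For a word $w=w_1w_2\cdots w_n$ with $n\ge m$, its successor under $f$ is the word $\hat f(w)=u_1\cdots u_{n-m+1}$ with $u_j=f(w_j,w_{j+1},\dots,w_{j+m-1})$. For $k\le n$, $\mathrm{left}_k(w)=w_1\cdots w_k$ and $\mathrm{right}_k(w)=w_{n-k+1}\cdots w_n$. The global map is $\tau:S^{\mathbb Z}\to S^{\mathbb Z}$, $\tau(c)(i)=f(c(i-L),\dots,c(i+R))$ for fixed integers $L,R\ge 0$ with $L+1+R=m$; the CA is (globally) injective if $\tau$ is injective. Two local configurations $\alpha,\beta$ of the same length $n$ are periodic if: $n\ge m$; $\alpha\ne\beta$; $\mathrm{left}_{m-1}(\alpha)=\mathrm{right}_{m-1}(\alpha)$; $\mathrm{left}_{m-1}(\beta)=\mathrm{right}_{m-1}(\beta)$; and $\hat f(\alpha)=\hat f(\beta)$. *)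

theory Defs
  imports Main
begin

(* States: S = {0..<p}, represented as naturals below p.
   A local rule f : S^m -> S is a function on words (lists) of length m. *)

definition words_over :: "nat \<Rightarrow> nat list set" where
  "words_over p = {w. \<forall>a\<in>set w. a < p}"

definition local_rule :: "nat \<Rightarrow> nat \<Rightarrow> (nat list \<Rightarrow> nat) \<Rightarrow> bool" where
  "local_rule p m f \<longleftrightarrow> (\<forall>w. length w = m \<and> w \<in> words_over p \<longrightarrow> f w < p)"

definition succ_word :: "(nat list \<Rightarrow> nat) \<Rightarrow> nat \<Rightarrow> nat list \<Rightarrow> nat list" where
  "succ_word f m w = map (\<lambda>j. f (take m (drop j w))) [0..<length w - m + 1]"

definition left_k :: "nat \<Rightarrow> 'a list \<Rightarrow> 'a list" where
  "left_k k w = take k w"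

definition right_k :: "nat \<Rightarrow> 'a list \<Rightarrow> 'a list" where
  "right_k k w = drop (length w - k) w"

definition configs :: "nat \<Rightarrow> (int \<Rightarrow> nat) set" where
  "configs p = {c. \<forall>i. c i < p}"

definition global_map :: "(nat list \<Rightarrow> nat) \<Rightarrow> nat \<Rightarrow> nat \<Rightarrow> (int \<Rightarrow> nat) \<Rightarrow> int \<Rightarrow> nat" where
  "global_map f L R c i = f (map (\<lambda>k. c (i - int L + int k)) [0..<L + 1 + R])"

definition periodic_pair :: "nat \<Rightarrow> nat \<Rightarrow> (nat list \<Rightarrow> nat) \<Rightarrow> nat list \<Rightarrow> nat list \<Rightarrow> bool" where
  "periodic_pair p m f \<alpha> \<beta> \<longleftrightarrow>
     \<alpha> \<in> words_over p \<and> \<beta> \<in> words_over p \<and>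
     length \<alpha> = length \<beta> \<and> length \<alpha> \<ge> m \<and> \<alpha> \<noteq> \<beta> \<and>
     left_k (m - 1) \<alpha> = right_k (m - 1) \<alpha> \<and>
     left_k (m - 1) \<beta> = right_k (m - 1) \<beta> \<and>
     succ_word f m \<alpha> = succ_word f m \<beta>"

end

theory Submission
  imports Defs
begin

(*
  A periodic pair \<alpha>, \<beta> of length n yields two distinct spatially periodic configurations,
  repeating \<alpha> resp. \<beta> with period n - (m - 1), which the global map sends to the same
  configuration.

  Conversely let c \<noteq> d have the same image. If they differ at infinitely many cells, then by
  pigeonhole two such cells k < l carry the same pair of (m - 1)-windows of c and d, and the
  segments of c and d from k to l + m - 2 form a periodic pair. If they differ only inside
  [a, b], take the segments from a - (m - 1) to b and append the common (m - 1)-window in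
  front of a: each m-window of the resulting words is either an m-window of c resp. d or
  lies in the part where the two words agree.
*)

definition window :: "(int \<Rightarrow> 'a) \<Rightarrow> int \<Rightarrow> nat \<Rightarrow> 'a list" where
  "window c a n = map (\<lambda>k. c (a + int k)) [0..<n]"

lemma length_window [simp]: "length (window c a n) = n"
  by (simp add: window_def)

lemma nth_window [simp]: "t < n \<Longrightarrow> window c a n ! t = c (a + int t)"
  by (simp add: window_def)

lemma drop_window: "drop j (window c a n) = window c (a + int j) (n - j)"
  by (rule nth_equalityI) (auto simp: add.assoc)

lemma take_window: "take t (window c a n) = window c a (min t n)"
  by (rule nth_equalityI) auto

lemma take_drop_window: "j + k \<le> n \<Longrightarrow> take k (drop j (window c a n)) = window c (a + int j) k"
  by (simp add: drop_window take_window)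

lemma window_cong:
  "(\<And>t. t < n \<Longrightarrow> c (a + int t) = d (a + int t)) \<Longrightarrow> window c a n = window d a n"
  by (rule nth_equalityI) auto

lemma window_in_words_over: "c \<in> configs p \<Longrightarrow> window c a n \<in> words_over p"
  by (auto simp: configs_def words_over_def window_def)

lemma global_map_eq_window: "L + 1 + R = m \<Longrightarrow> global_map f L R c i = f (window c (i - int L) m)"
  by (simp add: global_map_def window_def)

lemma length_succ_word: "length (succ_word f m w) = length w - m + 1"
  by (simp add: succ_word_def)

lemma nth_succ_word: "j < length w - m + 1 \<Longrightarrow> succ_word f m w ! j = f (take m (drop j w))"
  by (simp add: succ_word_def del: upt_Suc)

lemma succ_word_eqI:
  assumes "length \<alpha> = length \<beta>" "m \<le> length \<alpha>"
    and "\<And>j. j + m \<le> length \<alpha> \<Longrightarrow> f (take m (drop j \<alpha>)) = f (take m (drop j \<beta>))"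
  shows "succ_word f m \<alpha> = succ_word f m \<beta>"
proof (rule nth_equalityI)
  show "length (succ_word f m \<alpha>) = length (succ_word f m \<beta>)"
    using assms(1) by (simp add: length_succ_word)
next
  fix j assume "j < length (succ_word f m \<alpha>)"
  then have "j < length \<alpha> - m + 1" by (simp add: length_succ_word)
  then show "succ_word f m \<alpha> ! j = succ_word f m \<beta> ! j"
    using assms by (simp add: nth_succ_word)
qed

lemma nth_mod_period:
  assumes border: "left_k k w = right_k k w" and "k < length w" and "t < length w"
  shows "w ! t = w ! (t mod (length w - k))"
  using \<open>t < length w\<close>
proof (induction t rule: less_induct)
  case (less t)
  define P where "P = length w - k"
  have "P > 0" using assms(2) by (simp add: P_def)
  show ?case
  proof (cases "t < P")
    case True
    then show ?thesis by (simp add: P_def)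
  next
    case False
    have "w ! t = right_k k w ! (t - P)"
      using False less.prems by (simp add: right_k_def P_def)
    also have "\<dots> = w ! (t - P)"
      using False less.prems by (simp add: border[symmetric] left_k_def P_def)
    also have "\<dots> = w ! ((t - P) mod P)"
      using less.IH[of "t - P"] \<open>P > 0\<close> False less.prems by (simp add: P_def)
    also have "(t - P) mod P = t mod P"
      using False by (simp add: mod_if)
    finally show ?thesis by (simp add: P_def)
  qed
qed

definition periodic_extension :: "'a list \<Rightarrow> nat \<Rightarrow> int \<Rightarrow> 'a" where
  "periodic_extension w P i = w ! nat (i mod int P)"

lemma periodic_extension_in_configs:
  assumes "w \<in> words_over p" "0 < P" "P \<le> length w"
  shows "periodic_extension w P \<in> configs p"
proof -
  have "nat (i mod int P) < length w" for i
  proof -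
    have "0 \<le> i mod int P" "i mod int P < int P" using assms(2) by simp_all
    then show ?thesis using assms(3) by (simp add: nat_less_iff)
  qed
  then show ?thesis
    using assms(1) by (auto simp: configs_def words_over_def periodic_extension_def)
qed

lemma periodic_extension_of_nat:
  assumes "left_k k w = right_k k w" "k < length w" "t < length w"
  shows "periodic_extension w (length w - k) (int t) = w ! t"
  using nth_mod_period[OF assms]
  by (simp add: periodic_extension_def flip: of_nat_mod)

lemma periodic_extension_inject:
  assumes "left_k k v = right_k k v" "left_k k w = right_k k w"
    and "length v = length w" "k < length w"
    and "periodic_extension v (length v - k) = periodic_extension w (length w - k)"
  shows "v = w"
proof (rule nth_equalityI)
  fix t assume "t < length v"
  then show "v ! t = w ! t"
    using assms periodic_extension_of_nat[of k v t] periodic_extension_of_nat[of k w t]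
    by metis
qed (fact assms(3))

lemma window_periodic_extension:
  assumes border: "left_k k w = right_k k w" and "k < length w" and "n \<le> k + 1"
  shows "window (periodic_extension w (length w - k)) a n
           = take n (drop (nat (a mod int (length w - k))) w)"
proof -
  define P where "P = length w - k"
  define r where "r = nat (a mod int P)"
  have "P > 0" using assms(2) by (simp add: P_def)
  then have "r < P" by (simp add: r_def nat_less_iff)
  have "window (periodic_extension w P) a n = take n (drop r w)"
  proof (rule nth_equalityI)
    fix t assume "t < length (window (periodic_extension w P) a n)"
    then have "t < n" by simp
    then have rt: "r + t < length w" using \<open>r < P\<close> assms(3) by (simp add: P_def)
    have "int ((r + t) mod P) = (a + int t) mod int P"
      using \<open>P > 0\<close> by (simp add: r_def zmod_int mod_add_left_eq)
    then have "nat ((a + int t) mod int P) = (r + t) mod P" by linarith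
    then have "periodic_extension w P (a + int t) = w ! (r + t)"
      using nth_mod_period[OF border assms(2) rt] by (simp add: periodic_extension_def P_def)
    then show "window (periodic_extension w P) a n ! t = take n (drop r w) ! t"
      using \<open>t < n\<close> rt by simp
  qed (use \<open>r < P\<close> assms(3) in \<open>simp add: P_def\<close>)
  then show ?thesis by (simp add: P_def r_def)
qed

lemma global_map_periodic_extension:
  assumes "L + 1 + R = m" and border: "left_k (m - 1) w = right_k (m - 1) w"
    and "m \<le> length w"
  shows "global_map f L R (periodic_extension w (length w - (m - 1))) i
           = succ_word f m w ! nat ((i - int L) mod int (length w - (m - 1)))"
proof -
  define P where "P = length w - (m - 1)"
  have "0 < P" "P = length w - m + 1" using assms by (auto simp: P_def)
  then have "nat ((i - int L) mod int P) < length w - m + 1"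
    by (simp add: nat_less_iff)
  moreover have "m - 1 < length w" "m \<le> m - 1 + 1" using assms by auto
  ultimately show ?thesis
    using window_periodic_extension[OF border] global_map_eq_window[OF assms(1)]
    by (simp add: P_def nth_succ_word)
qed

lemma periodic_pair_not_inj:
  assumes "L + 1 + R = m" and "periodic_pair p m f \<alpha> \<beta>"
  shows "\<not> inj_on (global_map f L R) (configs p)"
proof
  assume inj: "inj_on (global_map f L R) (configs p)"
  define extend where "extend w = periodic_extension w (length w - (m - 1))" for w :: "nat list"
  have pair: "\<alpha> \<in> words_over p" "\<beta> \<in> words_over p" "length \<alpha> = length \<beta>" "m \<le> length \<alpha>"
    "\<alpha> \<noteq> \<beta>" "left_k (m - 1) \<alpha> = right_k (m - 1) \<alpha>" "left_k (m - 1) \<beta> = right_k (m - 1) \<beta>"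
    "succ_word f m \<alpha> = succ_word f m \<beta>"
    using assms(2) by (auto simp: periodic_pair_def)
  have m: "0 < m" using assms(1) by simp
  have "global_map f L R (extend \<alpha>) = global_map f L R (extend \<beta>)"
  proof
    fix i show "global_map f L R (extend \<alpha>) i = global_map f L R (extend \<beta>) i"
      unfolding extend_def global_map_periodic_extension[OF assms(1) pair(6,4)]
        global_map_periodic_extension[OF assms(1) pair(7) pair(4)[unfolded pair(3)]]
      by (simp add: pair(3,8))
  qed
  moreover have "extend \<alpha> \<in> configs p" "extend \<beta> \<in> configs p"
    using periodic_extension_in_configs pair m by (auto simp: extend_def)
  ultimately have "extend \<alpha> = extend \<beta>"
    using inj by (auto dest: inj_onD)
  moreover have "m - 1 < length \<beta>" using pair(3,4) m by simp
  ultimately have "\<alpha> = \<beta>"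
    unfolding extend_def using periodic_extension_inject[OF pair(6,7,3)] by blast
  with \<open>\<alpha> \<noteq> \<beta>\<close> show False by contradiction
qed

lemma periodic_pair_of_repeated_windows:
  assumes "c \<in> configs p" "d \<in> configs p" "1 \<le> m"
    and same_image: "\<And>a. f (window c a m) = f (window d a m)"
    and "k < l" "c k \<noteq> d k"
    and "window c k (m - 1) = window c l (m - 1)" "window d k (m - 1) = window d l (m - 1)"
  shows "\<exists>\<alpha> \<beta>. periodic_pair p m f \<alpha> \<beta>"
proof -
  define n where "n = nat (l - k) + (m - 1)"
  have border: "left_k (m - 1) (window e k n) = right_k (m - 1) (window e k n)"
    if "window e k (m - 1) = window e l (m - 1)" for e :: "int \<Rightarrow> nat"
    using that \<open>k < l\<close> by (simp add: left_k_def right_k_def take_window drop_window n_def)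
  have "periodic_pair p m f (window c k n) (window d k n)"
    unfolding periodic_pair_def
  proof (intro conjI)
    have "window c k n ! 0 \<noteq> window d k n ! 0"
      using assms(5,6) by (simp add: n_def)
    then show "window c k n \<noteq> window d k n" by metis
    show "succ_word f m (window c k n) = succ_word f m (window d k n)"
      by (rule succ_word_eqI) (use same_image \<open>k < l\<close> in \<open>auto simp: take_drop_window n_def\<close>)
  qed (use assms border window_in_words_over in \<open>auto simp: n_def\<close>)
  then show ?thesis by blast
qed

lemma periodic_pair_of_infinite_difference:
  assumes "c \<in> configs p" "d \<in> configs p" "1 \<le> m"
    and same_image: "\<And>a. f (window c a m) = f (window d a m)"
    and "infinite {i. c i \<noteq> d i}"
  shows "\<exists>\<alpha> \<beta>. periodic_pair p m f \<alpha> \<beta>"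
proof -
  define D where "D = {i. c i \<noteq> d i}"
  define g where "g i = (window c i (m - 1), window d i (m - 1))" for i
  define W where "W = {w :: nat list. set w \<subseteq> {0..<p} \<and> length w = m - 1}"
  have "finite W" unfolding W_def by (rule finite_lists_length_eq) simp
  moreover have "g ` D \<subseteq> W \<times> W"
    using assms(1,2) by (auto simp: g_def W_def window_def configs_def)
  ultimately have "\<not> inj_on g D"
    using assms(5) finite_subset finite_imageD unfolding D_def by blast
  then obtain k l where kl: "k \<in> D" "l \<in> D" "k < l" "g k = g l"
    unfolding inj_on_def by (metis linorder_neqE)
  show ?thesis
    by (rule periodic_pair_of_repeated_windows[OF assms(1-4) \<open>k < l\<close>])
      (use kl in \<open>simp_all add: D_def g_def\<close>)
qed

lemma periodic_pair_of_finite_difference: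
  assumes "c \<in> configs p" "d \<in> configs p" "1 \<le> m"
    and same_image: "\<And>i. f (window c i m) = f (window d i m)"
    and agree: "\<And>i. i < a \<or> b < i \<Longrightarrow> c i = d i"
    and "a \<le> b" "c a \<noteq> d a"
  shows "\<exists>\<alpha> \<beta>. periodic_pair p m f \<alpha> \<beta>"
proof -
  define s where "s = a - int (m - 1)"
  define n where "n = nat (b - s) + m"
  define A where "A = window c s n"
  define B where "B = window d s n"
  define u where "u = window c s (m - 1)"
  define k where "k = n - (m - 1)"
  have n: "m \<le> n" "int n = b - s + int m"
    using assms(3,6) by (auto simp: n_def s_def)
  have u: "u = window d s (m - 1)"
    unfolding u_def by (rule window_cong) (rule agree, unfold s_def, linarith)
  have tail: "drop k A = drop k B"
    unfolding A_def B_def drop_window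
    by (rule window_cong) (rule agree, use n assms(3) in \<open>simp add: k_def\<close>)
  have "A ! (m - 1) \<noteq> B ! (m - 1)"
    using n assms(3,7) by (simp add: A_def B_def s_def)
  then have "A \<noteq> B" by metis
  have windows: "f (take m (drop j (A @ u))) = f (take m (drop j (B @ u)))" for j
  proof (cases "j + m \<le> n")
    case True
    then show ?thesis
      using same_image by (simp add: A_def B_def take_drop_window)
  next
    case False
    then have "k \<le> j" by (simp add: k_def)
    then have "drop j (A @ u) = drop (j - k) (drop k A @ u)"
              "drop j (B @ u) = drop (j - k) (drop k B @ u)"
      using n by (simp_all add: A_def B_def k_def)
    then show ?thesis using tail by simp
  qed
  have "periodic_pair p m f (A @ u) (B @ u)"
    unfolding periodic_pair_def
  proof (intro conjI)
    show "succ_word f m (A @ u) = succ_word f m (B @ u)"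
      by (rule succ_word_eqI) (use n windows in \<open>simp_all add: A_def B_def\<close>)
  qed (use n u \<open>A \<noteq> B\<close> window_in_words_over[OF assms(1)] window_in_words_over[OF assms(2)]
       in \<open>auto simp: A_def B_def u_def left_k_def right_k_def take_window words_over_def\<close>)
  then show ?thesis by blast
qed

lemma not_inj_periodic_pair:
  assumes "L + 1 + R = m" and "\<not> inj_on (global_map f L R) (configs p)"
  shows "\<exists>\<alpha> \<beta>. periodic_pair p m f \<alpha> \<beta>"
proof -
  obtain c d where cd: "c \<in> configs p" "d \<in> configs p" "c \<noteq> d"
    and image: "global_map f L R c = global_map f L R d"
    using assms(2) unfolding inj_on_def by blast
  have same_image: "f (window c i m) = f (window d i m)" for i
    using fun_cong[OF image, of "i + int L"] global_map_eq_window[OF assms(1)] by simp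
  have m: "1 \<le> m" using assms(1) by simp
  define D where "D = {i. c i \<noteq> d i}"
  have "D \<noteq> {}" using cd(3) by (auto simp: D_def)
  show ?thesis
  proof (cases "finite D")
    case True
    have agree: "c i = d i" if "i < Min D \<or> Max D < i" for i
    proof (rule ccontr)
      assume "c i \<noteq> d i"
      then have "i \<in> D" by (simp add: D_def)
      then have "Min D \<le> i" "i \<le> Max D" using True by simp_all
      with that show False by linarith
    qed
    have "Min D \<in> D" using True \<open>D \<noteq> {}\<close> by simp
    then have "Min D \<le> Max D" "c (Min D) \<noteq> d (Min D)"
      using True by (simp_all add: D_def)
    then show ?thesis
      using periodic_pair_of_finite_difference[OF cd(1,2) m same_image agree] by blast
  next
    case False
    then show ?thesis
      using periodic_pair_of_infinite_difference[OF cd(1,2) m same_image] by (simp add: D_def)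
  qed
qed

text \<open>Neither \<open>p \<ge> 2\<close> nor \<open>m \<ge> 2\<close> nor the local rule taking values in \<open>S\<close> is needed.\<close>

theorem theorem2:
  fixes p m L R :: nat and f :: "nat list \<Rightarrow> nat"
  assumes "p \<ge> 2" and "m \<ge> 2" and "L + 1 + R = m"
    and "local_rule p m f"
  shows "inj_on (global_map f L R) (configs p) \<longleftrightarrow>
         \<not> (\<exists>\<alpha> \<beta>. periodic_pair p m f \<alpha> \<beta>)"
  using periodic_pair_not_inj[OF assms(3)] not_inj_periodic_pair[OF assms(3)] by blast

end
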